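(* Let $b^*=\sum_{\alpha=1}^N\int_Y\tilde b_\alpha(y)\,dy$ and, for $1\le i\le d$, let $(\omega_{i,\alpha})_{1\le\alpha\le N}\in(H^1_\#(Y))^N/(\mathbb{R}\mathbb{1})$ solve the periodic cell problem $$\tilde b_\alpha\cdot(\nabla_y\omega_{i,\alpha}+e_i)-\mathrm{div}_y\big(\tilde D_\alpha(\nabla_y\omega_{i,\alpha}+e_i)\big)+\sum_{\beta=1}^N\Pi_{\alpha\beta}\varphi^*_\alpha\varphi_\beta(\omega_{i,\beta}-\omega_{i,\alpha})=\varphi_\alpha\varphi^*_\alpha\rho_\alpha\,b^*\cdot e_i\ \text{ in }Y,\quad 1\le\alpha\le N.$$ Then the matrix $\mathcal D\in\mathbb{R}^{d\times d}$ defined by $$\mathcal D_{ij}=\sum_{\alpha=1}^N\int_Y\tilde D_\alpha(\nabla_y\omega_{i,\alpha}+e_i)\cdot(\nabla_y\omega_{j,\alpha}+e_j)\,dy-\frac12\sum_{\alpha,\beta=1}^N\int_Y\varphi^*_\alpha\varphi_\beta\Pi_{\alpha\beta}(\omega_{i,\alpha}-\omega_{i,\beta})(\omega_{j,\alpha}-\omega_{j,\beta})\,dy$$ is symmetric positive definite.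
   Context: Setting: $d\ge1$, $N\ge1$, $Y=]0,1[^d$; $Y$-periodic means $\mathbb{Z}^d$-periodic; $(e_i)$ is the canonical basis of $\mathbb{R}^d$; $\mathbb{1}=(1,\dots,1)\in\mathbb{R}^N$. For $1\le\alpha,\beta\le N$: $\rho_\alpha\in L^\infty_\#$, $\rho_\alpha\ge c_\alpha>0$; $b_\alpha\in L^\infty_\#(\mathbb{R}^d;\mathbb{R}^d)$ with $\mathrm{div}\,b_\alpha\in L^\infty_\#$; $D_\alpha\in L^\infty_\#(\mathbb{R}^d;\mathbb{R}^{d\times d})$ symmetric, $D_\alpha\xi\cdot\xi\ge c_\alpha|\xi|^2$; $\Pi$ an $N\times N$ matrix of $L^\infty_\#$ functions, $\Pi_{\alpha\beta}\le0$ for $\alpha\ne\beta$, irreducible (no partition of $\{1,\dots,N\}$ into disjoint nonempty $\mathcal B,\mathcal B'$ with $\Pi_{\alpha\beta}=0$ for $\alpha\in\mathcal B,\beta\in\mathcal B'$). $\lambda$, $(\varphi_\alpha)$, $(\varphi^*_\alpha)$ (positive, in $H^1_\#(Y)$) are the common first eigenvalue and eigenfunctions of the periodic cell problems $b_\alpha\cdot\nabla_y\varphi_\alpha-\mathrm{div}_y(D_\alpha\nabla_y\varphi_\alpha)+\sum_\beta\Pi_{\alpha\beta}\varphi_\beta=\lambda\rho_\alpha\varphi_\alpha$ and $-\mathrm{div}_y(b_\alpha\varphi^*_\alpha)-\mathrm{div}_y(D_\alpha\nabla_y\varphi^*_\alpha)+\sum_\beta\Pi_{\beta\alpha}\varphi^*_\beta=\lambda\rho_\alpha\varphi^*_\alpha$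 in $Y$, normalized by $\sum_\alpha\int_Y\rho_\alpha\varphi_\alpha\varphi^*_\alpha dy=1$. $\tilde b_\alpha=\varphi_\alpha\varphi^*_\alpha b_\alpha+\varphi_\alpha D_\alpha\nabla_y\varphi^*_\alpha-\varphi^*_\alpha D_\alpha\nabla_y\varphi_\alpha$, $\tilde D_\alpha=\varphi_\alpha\varphi^*_\alpha D_\alpha$. *)

theory Defs
  imports "HOL-Analysis.Analysis"
begin

definition cellY :: "(real^'d) set" where
  "cellY = box 0 1"

definition lattice :: "(real^'d) set" where
  "lattice = {z. \<forall>i. z $ i \<in> \<int>}"

definition periodic :: "(real^'d \<Rightarrow> 'b) \<Rightarrow> bool" where
  "periodic f \<longleftrightarrow> (\<forall>x z. z \<in> lattice \<longrightarrow> f (x + z) = f x)"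

definition Linf_per :: "(real^'d \<Rightarrow> 'b::real_normed_vector) \<Rightarrow> bool" where
  "Linf_per f \<longleftrightarrow> f \<in> borel_measurable lebesgue \<and> periodic f \<and>
     (\<exists>M. AE x in lebesgue. norm (f x) \<le> M)"

definition C1_grad :: "(real^'d \<Rightarrow> real) \<Rightarrow> (real^'d \<Rightarrow> real^'d) \<Rightarrow> bool" where
  "C1_grad v g \<longleftrightarrow> (\<forall>x. (v has_derivative (\<lambda>h. g x \<bullet> h)) (at x)) \<and> continuous_on UNIV g"

definition C1c :: "(real^'d \<Rightarrow> real) \<Rightarrow> (real^'d \<Rightarrow> real^'d) \<Rightarrow> bool" where
  "C1c v g \<longleftrightarrow> C1_grad v g \<and> (\<exists>R. \<forall>x. norm x > R \<longrightarrow> v x = 0)"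

text \<open>Y-periodic C^1 test functions (dense in H^1_#(Y)).\<close>
definition C1_per :: "(real^'d \<Rightarrow> real) \<Rightarrow> (real^'d \<Rightarrow> real^'d) \<Rightarrow> bool" where
  "C1_per v g \<longleftrightarrow> C1_grad v g \<and> periodic v"

definition weak_grad :: "(real^'d \<Rightarrow> real) \<Rightarrow> (real^'d \<Rightarrow> real^'d) \<Rightarrow> bool" where
  "weak_grad u g \<longleftrightarrow> (\<forall>\<psi> g\<psi>. C1c \<psi> g\<psi> \<longrightarrow>
      (\<integral>x. u x *\<^sub>R g\<psi> x \<partial>lebesgue) = - (\<integral>x. \<psi> x *\<^sub>R g x \<partial>lebesgue))"

definition weak_div :: "(real^'d \<Rightarrow> real^'d) \<Rightarrow> (real^'d \<Rightarrow> real) \<Rightarrow> bool" where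
  "weak_div b h \<longleftrightarrow> (\<forall>\<psi> g\<psi>. C1c \<psi> g\<psi> \<longrightarrow>
      (\<integral>x. b x \<bullet> g\<psi> x \<partial>lebesgue) = - (\<integral>x. h x * \<psi> x \<partial>lebesgue))"

definition H1_per :: "(real^'d \<Rightarrow> real) \<Rightarrow> (real^'d \<Rightarrow> real^'d) \<Rightarrow> bool" where
  "H1_per u g \<longleftrightarrow> u \<in> borel_measurable lebesgue \<and> g \<in> borel_measurable lebesgue \<and>
     periodic u \<and> periodic g \<and>
     set_integrable lebesgue cellY (\<lambda>x. (u x)\<^sup>2) \<and>
     set_integrable lebesgue cellY (\<lambda>x. (norm (g x))\<^sup>2) \<and>
     weak_grad u g"

definition btil ::
  "('n \<Rightarrow> real^'d \<Rightarrow> real^'d) \<Rightarrow> ('n \<Rightarrow> real^'d \<Rightarrow> real^'d^'d) \<Rightarrow>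
   ('n \<Rightarrow> real^'d \<Rightarrow> real) \<Rightarrow> ('n \<Rightarrow> real^'d \<Rightarrow> real^'d) \<Rightarrow>
   ('n \<Rightarrow> real^'d \<Rightarrow> real) \<Rightarrow> ('n \<Rightarrow> real^'d \<Rightarrow> real^'d) \<Rightarrow> 'n \<Rightarrow> real^'d \<Rightarrow> real^'d" where
  "btil b Dm phi gphi phis gphis a y =
     (phi a y * phis a y) *\<^sub>R b a y + phi a y *\<^sub>R (Dm a y *v gphis a y)
       - phis a y *\<^sub>R (Dm a y *v gphi a y)"

definition Dtil ::
  "('n \<Rightarrow> real^'d \<Rightarrow> real^'d^'d) \<Rightarrow> ('n \<Rightarrow> real^'d \<Rightarrow> real) \<Rightarrow> ('n \<Rightarrow> real^'d \<Rightarrow> real)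
   \<Rightarrow> 'n \<Rightarrow> real^'d \<Rightarrow> real^'d^'d" where
  "Dtil Dm phi phis a y = (phi a y * phis a y) *\<^sub>R Dm a y"

definition bstar ::
  "('n::finite \<Rightarrow> real^'d \<Rightarrow> real^'d) \<Rightarrow> ('n \<Rightarrow> real^'d \<Rightarrow> real^'d^'d) \<Rightarrow>
   ('n \<Rightarrow> real^'d \<Rightarrow> real) \<Rightarrow> ('n \<Rightarrow> real^'d \<Rightarrow> real^'d) \<Rightarrow>
   ('n \<Rightarrow> real^'d \<Rightarrow> real) \<Rightarrow> ('n \<Rightarrow> real^'d \<Rightarrow> real^'d) \<Rightarrow> real^'d" where
  "bstar b Dm phi gphi phis gphis =
     (\<Sum>a\<in>UNIV. (\<integral>y\<in>cellY. btil b Dm phi gphi phis gphis a y \<partial>lebesgue))"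

definition homD ::
  "('n::finite \<Rightarrow> real^'d \<Rightarrow> real^'d^'d) \<Rightarrow> ('n \<Rightarrow> 'n \<Rightarrow> real^'d \<Rightarrow> real) \<Rightarrow>
   ('n \<Rightarrow> real^'d \<Rightarrow> real) \<Rightarrow> ('n \<Rightarrow> real^'d \<Rightarrow> real) \<Rightarrow>
   ('d \<Rightarrow> 'n \<Rightarrow> real^'d \<Rightarrow> real) \<Rightarrow> ('d \<Rightarrow> 'n \<Rightarrow> real^'d \<Rightarrow> real^'d) \<Rightarrow> real^'d^'d" where
  "homD Dm PP phi phis om gom = (\<chi> i j.
     (\<Sum>a\<in>UNIV. (\<integral>y\<in>cellY. (Dtil Dm phi phis a y *v (gom i a y + axis i 1)) \<bullet> (gom j a y + axis j 1) \<partial>lebesgue))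
     - 1/2 * (\<Sum>a\<in>UNIV. \<Sum>c\<in>UNIV. (\<integral>y\<in>cellY. phis a y * phi c y * PP a c y
              * (om i a y - om i c y) * (om j a y - om j c y) \<partial>lebesgue)))"

definition sym_pos_def :: "real^'d^'d \<Rightarrow> bool" where
  "sym_pos_def A \<longleftrightarrow> transpose A = A \<and> (\<forall>\<xi>. \<xi> \<noteq> 0 \<longrightarrow> \<xi> \<bullet> (A *v \<xi>) > 0)"

text \<open>Irreducibility of the coupling matrix (entries compared as L^infty functions, i.e. a.e.).\<close>
definition irreducible_coupling :: "('n \<Rightarrow> 'n \<Rightarrow> real^'d \<Rightarrow> real) \<Rightarrow> bool" where
  "irreducible_coupling PP \<longleftrightarrow> \<not> (\<exists>B B'. B \<noteq> {} \<and> B' \<noteq> {} \<and> B \<inter> B' = {} \<and> B \<union> B' = UNIV \<and>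
      (\<forall>a\<in>B. \<forall>c\<in>B'. AE y in lebesgue. PP a c y = 0))"

end

theory Submission
  imports Defs
begin

(* For xi in R^d put w_a = sum_i xi_i omega_(i,a). Expanding the quadratic form gives
     xi . D xi = sum_a int_Y Dt_a (grad w_a + xi) . (grad w_a + xi)
                 - 1/2 sum_(a,c) int_Y phis_a phi_c Pi_(a c) (w_a - w_c)^2.
   The first sum is nonnegative by coercivity of D_a and positivity of phi_a, phis_a, the second
   is nonpositive because Pi_(a c) <= 0 for a ~= c. Hence xi . D xi <= 0 forces grad w_a = -xi a.e.
   on Y. A periodic function cannot have a nonzero constant gradient: for a tensor product theta of
   quadratic B-splines, d theta / d y_k is a backward difference in the direction e_k, so it
   integrates to 0 against every periodic function, while int theta * xi_k = xi_k * int theta with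
   int theta > 0. Symmetry of D is inherited from that of D_a. *)

section \<open>Quadratic B-spline bump functions\<close>

definition ramp :: "real \<Rightarrow> real" where
  "ramp s = max 0 s"

lemma continuous_on_ramp [continuous_intros]:
  "continuous_on S f \<Longrightarrow> continuous_on S (\<lambda>x. ramp (f x))"
  unfolding ramp_def by (intro continuous_intros)

lemma has_real_derivative_ramp_square: "((\<lambda>s. (ramp s)\<^sup>2) has_real_derivative 2 * ramp s) (at s)"
proof -
  consider "s < 0" | "s = 0" | "s > 0" by linarith
  then show ?thesis
  proof cases
    case 1
    show ?thesis
      by (rule has_field_derivative_transform_within_open[where f="\<lambda>_. 0" and S="{..<0}"])
         (use 1 in \<open>auto simp: ramp_def\<close>)
  next
    case 2
    have "((\<lambda>h. (ramp h)\<^sup>2 / h) \<longlongrightarrow> 0) (at 0)"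
    proof (rule tendsto_sandwich[where f="\<lambda>h. - \<bar>h\<bar>" and h="\<lambda>h. \<bar>h\<bar>"])
      show "\<forall>\<^sub>F h in at 0. - \<bar>h\<bar> \<le> (ramp h)\<^sup>2 / h" "\<forall>\<^sub>F h in at 0. (ramp h)\<^sup>2 / h \<le> \<bar>h\<bar>"
        by (auto simp: ramp_def max_def power2_eq_square divide_simps)
      show "((\<lambda>h::real. \<bar>h\<bar>) \<longlongrightarrow> 0) (at 0)" "((\<lambda>h::real. - \<bar>h\<bar>) \<longlongrightarrow> 0) (at 0)"
        by (auto intro!: tendsto_eq_intros)
    qed
    then show ?thesis using 2 by (simp add: DERIV_def ramp_def)
  next
    case 3
    show ?thesis
      by (rule has_field_derivative_transform_within_open[where f="\<lambda>s. s\<^sup>2" and S="{0<..}"])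
         (use 3 in \<open>auto intro!: derivative_eq_intros simp: ramp_def\<close>)
  qed
qed

definition hat :: "real \<Rightarrow> real" where
  "hat t = ramp t - 2 * ramp (t - 1) + ramp (t - 2)"

definition qspline :: "real \<Rightarrow> real" where
  "qspline t = ((ramp t)\<^sup>2 - 3 * (ramp (t - 1))\<^sup>2 + 3 * (ramp (t - 2))\<^sup>2 - (ramp (t - 3))\<^sup>2) / 2"

lemma continuous_on_hat [continuous_intros]:
  "continuous_on S f \<Longrightarrow> continuous_on S (\<lambda>x. hat (f x))"
  unfolding hat_def by (intro continuous_intros)

lemma continuous_on_qspline [continuous_intros]:
  "continuous_on S f \<Longrightarrow> continuous_on S (\<lambda>x. qspline (f x))"
  unfolding qspline_def by (intro continuous_intros) auto

lemma has_real_derivative_qspline: "(qspline has_real_derivative hat t - hat (t - 1)) (at t)"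
proof -
  have shifted: "((\<lambda>t. (ramp (t - c))\<^sup>2) has_real_derivative 2 * ramp (t - c)) (at t)" for c
    by (rule DERIV_chain2[OF has_real_derivative_ramp_square, of "\<lambda>t. t - c" 1, simplified])
       (auto intro!: derivative_eq_intros)
  have "((\<lambda>t. ((ramp (t - 0))\<^sup>2 - 3 * (ramp (t - 1))\<^sup>2 + 3 * (ramp (t - 2))\<^sup>2 - (ramp (t - 3))\<^sup>2) / 2)
      has_real_derivative (2 * ramp (t - 0) - 3 * (2 * ramp (t - 1)) + 3 * (2 * ramp (t - 2))
        - 2 * ramp (t - 3)) / 2) (at t)"
    by (intro DERIV_cdivide DERIV_diff DERIV_add DERIV_cmult shifted)
  then have "(qspline has_real_derivative (2 * ramp (t - 0) - 3 * (2 * ramp (t - 1))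
      + 3 * (2 * ramp (t - 2)) - 2 * ramp (t - 3)) / 2) (at t)"
    by (simp add: qspline_def[abs_def])
  then show ?thesis
    by (rule DERIV_cong) (simp add: hat_def field_simps)
qed

lemma hat_eq_0: "t \<le> 0 \<or> 2 \<le> t \<Longrightarrow> hat t = 0"
  unfolding hat_def ramp_def by auto

lemma qspline_eq_0: "t \<le> 0 \<or> 3 \<le> t \<Longrightarrow> qspline t = 0"
  unfolding qspline_def ramp_def by (auto simp: max_def power2_eq_square algebra_simps)

lemma qspline_nonneg: "0 \<le> qspline t"
proof -
  consider "t \<le> 1" | "1 \<le> t" "t \<le> 2" | "2 \<le> t" "t \<le> 3" | "3 \<le> t" by linarith
  then show ?thesis
  proof cases
    case 2
    have "0 \<le> (t - 1) * (2 - t)" using 2 by simp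
    then show ?thesis using 2 unfolding qspline_def ramp_def by (auto simp: max_def power2_eq_square algebra_simps)
  next
    case 3
    have "0 \<le> (t - 3) * (t - 3)" by simp
    then show ?thesis using 3 unfolding qspline_def ramp_def by (auto simp: max_def power2_eq_square algebra_simps)
  qed (auto simp: qspline_def ramp_def max_def power2_eq_square algebra_simps)
qed

lemma qspline_ge_half: "1 \<le> t \<Longrightarrow> t \<le> 2 \<Longrightarrow> 1/2 \<le> qspline t"
proof -
  assume t: "1 \<le> t" "t \<le> 2"
  have "0 \<le> (t - 1) * (2 - t)" using t by simp
  then show ?thesis using t unfolding qspline_def ramp_def by (auto simp: max_def power2_eq_square algebra_simps)
qed

definition bump :: "real^'d \<Rightarrow> real" where
  "bump x = (\<Prod>j\<in>UNIV. qspline (x$j))"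

definition bump_grad :: "real^'d \<Rightarrow> real^'d" where
  "bump_grad x = (\<chi> k. (hat (x$k) - hat (x$k - 1)) * (\<Prod>j\<in>UNIV-{k}. qspline (x$j)))"

definition hat_bump :: "'d \<Rightarrow> real^'d \<Rightarrow> real" where
  "hat_bump k x = hat (x$k) * (\<Prod>j\<in>UNIV-{k}. qspline (x$j))"

lemma has_derivative_bump: "(bump has_derivative (\<lambda>h. bump_grad x \<bullet> h)) (at x)"
proof -
  have nth: "((\<lambda>x. qspline (x$l)) has_derivative (\<lambda>h. (hat (x$l) - hat (x$l - 1)) * h$l)) (at x)"
    for l
    using has_derivative_compose[OF bounded_linear.has_derivative[OF bounded_linear_vec_nth has_derivative_ident]
        has_field_derivative_imp_has_derivative[OF has_real_derivative_qspline[of "x$l"]]]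
    by simp
  have "(bump has_derivative
      (\<lambda>h. \<Sum>l\<in>UNIV. (hat (x$l) - hat (x$l - 1)) * h$l * (\<Prod>j\<in>UNIV-{l}. qspline (x$j)))) (at x)"
    unfolding bump_def[abs_def] by (rule has_derivative_prod) (rule nth)
  then show ?thesis
    by (rule has_derivative_eq_rhs) (auto simp: bump_grad_def inner_vec_def mult_ac)
qed

lemma continuous_on_bump: "continuous_on S bump"
  unfolding bump_def by (intro continuous_intros)

lemma continuous_on_bump_grad: "continuous_on S bump_grad"
  unfolding bump_grad_def by (intro continuous_intros continuous_on_vec_lambda)

lemma continuous_on_hat_bump: "continuous_on S (hat_bump k)"
  unfolding hat_bump_def by (intro continuous_intros)

text \<open>This identity is what makes \<open>\<integral> u \<cdot> bump_grad $ k\<close> vanish for periodic \<open>u\<close>.\<close>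

lemma bump_grad_nth: "bump_grad x $ k = hat_bump k x - hat_bump k (x - axis k 1)"
proof -
  have "(\<Prod>j\<in>UNIV-{k}. qspline ((x - axis k 1)$j)) = (\<Prod>j\<in>UNIV-{k}. qspline (x$j))"
    by (rule prod.cong) (auto simp: axis_def)
  then show ?thesis
    by (simp add: bump_grad_def hat_bump_def algebra_simps)
qed

lemma bump_support: "bump x \<noteq> 0 \<Longrightarrow> x \<in> cbox 0 (vec 3)"
proof -
  assume "bump x \<noteq> 0"
  then have "qspline (x$j) \<noteq> 0" for j
    unfolding bump_def by auto
  then have "0 \<le> x$j \<and> x$j \<le> 3" for j
    using qspline_eq_0[of "x$j"] by force
  then show ?thesis by (simp add: mem_box_cart)
qed

lemma hat_bump_support: "hat_bump k x \<noteq> 0 \<Longrightarrow> x \<in> cbox 0 (vec 3)"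
proof -
  assume "hat_bump k x \<noteq> 0"
  then have "hat (x$k) \<noteq> 0" "\<And>j. j \<noteq> k \<Longrightarrow> qspline (x$j) \<noteq> 0"
    unfolding hat_bump_def by auto
  then have "0 \<le> x$j \<and> x$j \<le> 3" for j
    using hat_eq_0[of "x$k"] qspline_eq_0[of "x$j"] by (cases "j = k") force+
  then show ?thesis by (simp add: mem_box_cart)
qed

lemma bump_nonneg: "0 \<le> bump x"
  unfolding bump_def by (intro prod_nonneg qspline_nonneg)

lemma C1c_bump: "C1c (bump :: real^'d::finite \<Rightarrow> real) bump_grad"
proof -
  obtain R where "\<forall>x\<in>cbox 0 (vec 3 :: real^'d). norm x \<le> R"
    using bounded_cbox bounded_iff by blast
  then have "norm x > R \<Longrightarrow> bump x = 0" for x :: "real^'d"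
    using bump_support by force
  then show ?thesis
    unfolding C1c_def C1_grad_def using has_derivative_bump continuous_on_bump_grad by blast
qed

lemma integrable_continuous_bounded_support:
  fixes f :: "'a::euclidean_space \<Rightarrow> 'b::euclidean_space"
  assumes "continuous_on UNIV f" "bounded S" "\<And>x. f x \<noteq> 0 \<Longrightarrow> x \<in> S"
  shows "integrable lebesgue f"
proof -
  have "integrable lborel (\<lambda>x. indicator (closure S) x *\<^sub>R f x)"
    using assms(1,2) by (intro borel_integrable_compact) (auto intro: continuous_on_subset)
  moreover have "(\<lambda>x. indicator (closure S) x *\<^sub>R f x) = f"
    using assms(3) closure_subset by (force simp: indicator_def)
  ultimately show ?thesis
    using assms(1) by (simp add: integrable_completion borel_measurable_continuous_onI)
qed

lemma integrable_bump: "integrable lebesgue bump"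
  using bump_support continuous_on_bump
  by (intro integrable_continuous_bounded_support[where S="cbox 0 (vec 3)"]) auto

lemma integral_bump_pos: "0 < (\<integral>x. bump (x :: real^'d::finite) \<partial>lebesgue)"
proof -
  define C :: "(real^'d) set" where "C = cbox (vec 1) (vec 2)"
  have lower: "bump x \<ge> (1/2) ^ CARD('d)" if "x \<in> C" for x
  proof -
    have "1/2 \<le> qspline (x$j)" for j
      using that qspline_ge_half[of "x$j"] by (simp add: C_def mem_box_cart)
    then have "(\<Prod>j\<in>(UNIV::'d set). 1/2) \<le> bump x"
      unfolding bump_def by (intro prod_mono) auto
    then show ?thesis by simp
  qed
  have "(\<integral>x. indicator C x * (1/2) ^ CARD('d) \<partial>lebesgue) \<le> (\<integral>x. bump (x :: real^'d) \<partial>lebesgue)"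
    by (intro Bochner_Integration.integral_mono integrable_bump integrable_mult_left)
       (use lmeasurable_cbox[of "vec 1" "vec 2"] in
         \<open>auto simp: lower integrable_indicator_iff bump_nonneg C_def fmeasurable_def split: split_indicator\<close>)
  moreover have "measure lebesgue C = 1"
  proof -
    have "vec 1 \<in> C" by (simp add: C_def mem_box_cart)
    then have "C \<noteq> {}" by blast
    then show ?thesis using content_cbox_cart[of "vec 1" "vec 2 :: real^'d"] by (simp add: C_def)
  qed
  ultimately show ?thesis
    by (simp add: C_def) (meson less_le_trans zero_less_divide_iff zero_less_numeral zero_less_one zero_less_power)
qed

section \<open>Periodic functions\<close>

lemma lebesgue_translation: "distr lebesgue lebesgue (\<lambda>x. c + x) = (lebesgue :: 'a::euclidean_space measure)"
  using lebesgue_affine_euclidean[of "\<lambda>_. 1" c] by (simp add: euclidean_representation density_1)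

lemma translation_measurable_lebesgue: "(\<lambda>x. c + x) \<in> lebesgue \<rightarrow>\<^sub>M (lebesgue :: 'a::euclidean_space measure)"
  using lebesgue_affine_measurable[of "\<lambda>_. 1" c] by (simp add: euclidean_representation)

lemma integral_lebesgue_translate:
  fixes f :: "'a::euclidean_space \<Rightarrow> 'b::{banach, second_countable_topology}"
  assumes "f \<in> borel_measurable lebesgue"
  shows "(\<integral>x. f (c + x) \<partial>lebesgue) = (\<integral>x. f x \<partial>lebesgue)"
  using integral_distr[OF translation_measurable_lebesgue assms, of c] by (simp add: lebesgue_translation)

lemma integrable_lebesgue_translate_iff:
  fixes f :: "'a::euclidean_space \<Rightarrow> 'b::{banach, second_countable_topology}"
  assumes "f \<in> borel_measurable lebesgue"
  shows "integrable lebesgue (\<lambda>x. f (c + x)) \<longleftrightarrow> integrable lebesgue f"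
  using integrable_distr_eq[OF translation_measurable_lebesgue assms, of c] by (simp add: lebesgue_translation)

lemma AE_lebesgue_translate:
  assumes "AE x in lebesgue. P x"
  shows "AE x in (lebesgue :: 'a::euclidean_space measure). P (c + x)"
proof -
  have "AE x in distr lebesgue lebesgue (\<lambda>x. c + x). P x"
    by (subst lebesgue_translation) (rule assms)
  then show ?thesis by (rule AE_distrD[OF translation_measurable_lebesgue])
qed

lemma lattice_uminus: "z \<in> lattice \<Longrightarrow> - z \<in> lattice"
  unfolding lattice_def by simp

lemma axis_in_lattice: "axis k 1 \<in> lattice"
  unfolding lattice_def by (simp add: axis_def)

lemma periodic_translate:
  assumes "periodic f" "z \<in> lattice"
  shows "f (z + x) = f x" "f (x - z) = f x"
  using assms lattice_uminus unfolding periodic_def by (metis add.commute diff_conv_add_uminus)+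

lemma bounded_subset_cbox_nat:
  fixes S :: "(real^'d) set"
  assumes "bounded S"
  obtains N :: nat where "S \<subseteq> cbox (- vec N) (vec N)"
proof -
  obtain R where R: "\<forall>x\<in>S. norm x \<le> R"
    using assms bounded_iff by blast
  obtain N :: nat where "R \<le> N"
    using real_arch_simple by blast
  have "\<bar>x$i\<bar> \<le> N" if "x \<in> S" for x i
    using component_le_norm_cart[of x i] R that \<open>R \<le> N\<close> by force
  then have "S \<subseteq> cbox (- vec N) (vec N)"
    unfolding subset_eq mem_box_cart by (simp add: abs_le_iff minus_le_iff)
  then show ?thesis ..
qed

lemma lattice_cover_cbox:
  fixes N :: nat
  obtains Z :: "(real^'d) set"
  where "finite Z" "Z \<subseteq> lattice" "\<And>x. x \<in> cbox (- vec N) (vec N) \<Longrightarrow> \<exists>z\<in>Z. x - z \<in> cbox 0 1"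
proof
  define Z :: "(real^'d) set"
    where "Z = (\<lambda>f. \<chi> i. of_int (f i)) ` (UNIV \<rightarrow>\<^sub>E {- int N..int N})"
  show "finite Z"
    unfolding Z_def by (intro finite_imageI finite_PiE) auto
  show "Z \<subseteq> lattice"
    unfolding Z_def lattice_def by auto
  fix x :: "real^'d"
  assume "x \<in> cbox (- vec N) (vec N)"
  then have "- real N \<le> x$i \<and> x$i \<le> real N" for i
    by (simp add: mem_box_cart)
  then have "- int N \<le> \<lfloor>x$i\<rfloor> \<and> \<lfloor>x$i\<rfloor> \<le> int N" for i
    by (metis floor_mono floor_of_int of_int_of_nat_eq of_int_minus)
  then have "(\<lambda>i. \<lfloor>x$i\<rfloor>) \<in> UNIV \<rightarrow>\<^sub>E {- int N..int N}"
    by (simp add: PiE_UNIV_domain)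
  then have "(\<chi> i. of_int \<lfloor>x$i\<rfloor>) \<in> Z"
    unfolding Z_def by (rule rev_image_eqI) simp
  moreover have "x - (\<chi> i. of_int \<lfloor>x$i\<rfloor>) \<in> cbox 0 1"
    by (auto simp: mem_box_cart) linarith
  ultimately show "\<exists>z\<in>Z. x - z \<in> cbox 0 1" ..
qed

lemma AE_cbox_imp_cellY: "AE x in lebesgue. x \<in> cbox 0 1 \<longrightarrow> x \<in> cellY"
proof -
  have "cbox 0 1 - box 0 (1 :: real^'d) \<in> null_sets lebesgue"
    using negligible_frontier_interval negligible_iff_null_sets by blast
  then show ?thesis
    by (rule AE_I') (auto simp: cellY_def)
qed

definition L1_per :: "(real^'d \<Rightarrow> 'b::{banach, second_countable_topology}) \<Rightarrow> bool" where
  "L1_per f \<longleftrightarrow> f \<in> borel_measurable lebesgue \<and> periodic f \<and> set_integrable lebesgue cellY f"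

lemma L1_per_set_integrable_translate:
  fixes u :: "real^'d \<Rightarrow> 'b::{banach, second_countable_topology}"
  assumes "L1_per u" "z \<in> lattice"
  shows "set_integrable lebesgue ((+) z ` cbox 0 1) u"
proof -
  have um: "u \<in> borel_measurable lebesgue" and u: "periodic u" "set_integrable lebesgue cellY u"
    using assms(1) by (simp_all add: L1_per_def)
  define g where "g x = indicator (cbox 0 1) x *\<^sub>R u x" for x
  have gm: "g \<in> borel_measurable lebesgue"
    unfolding g_def by (intro borel_measurable_scaleR borel_measurable_indicator um) auto
  have "AE x in lebesgue. g x = indicator cellY x *\<^sub>R u x"
    using AE_cbox_imp_cellY
    by eventually_elim (use box_subset_cbox[of 0 1] in \<open>auto simp: g_def cellY_def indicator_def\<close>)
  then have "integrable lebesgue g \<longleftrightarrow> integrable lebesgue (\<lambda>x. indicator cellY x *\<^sub>R u x)"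
    using um by (intro integrable_cong_AE gm borel_measurable_scaleR borel_measurable_indicator)
      (auto simp: cellY_def)
  then have "integrable lebesgue g"
    using u by (simp add: set_integrable_def)
  have "x \<in> (+) z ` cbox 0 1 \<longleftrightarrow> - z + x \<in> cbox 0 1" for x
    by force
  then have "indicator ((+) z ` cbox 0 1) x *\<^sub>R u x = g (- z + x)" for x
    using periodic_translate(1)[OF u(1) lattice_uminus[OF assms(2)], of x] by (simp add: g_def indicator_def)
  then show ?thesis
    unfolding set_integrable_def using integrable_lebesgue_translate_iff[OF gm, of "- z"] \<open>integrable lebesgue g\<close>
    by simp
qed

lemma L1_per_set_integrable_cbox:
  fixes u :: "real^'d \<Rightarrow> 'b::{banach, second_countable_topology}" and N :: nat
  assumes "L1_per u"
  shows "set_integrable lebesgue (cbox (- vec N) (vec N)) u"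
proof -
  obtain Z :: "(real^'d) set"
    where Z: "finite Z" "Z \<subseteq> lattice" "\<And>x. x \<in> cbox (- vec N) (vec N) \<Longrightarrow> \<exists>z\<in>Z. x - z \<in> cbox 0 1"
    by (rule lattice_cover_cbox[of N]) blast
  have UN: "set_integrable lebesgue (\<Union>z\<in>Z. (+) z ` cbox 0 1) u"
    using Z(1,2) L1_per_set_integrable_translate[OF assms] lebesgue_sets_translation[of "cbox 0 1"]
    by (intro set_integrable_UN) auto
  have cover: "cbox (- vec N) (vec N) \<subseteq> (\<Union>z\<in>Z. (+) z ` cbox 0 1)"
    using Z(3) by (force simp: image_iff)
  show ?thesis
    by (rule set_integrable_subset[OF UN _ cover]) auto
qed

lemma L1_per_integrable_bounded_support:
  fixes u :: "real^'d \<Rightarrow> 'b::{banach, second_countable_topology}"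
    and h :: "real^'d \<Rightarrow> 'c::{banach, second_countable_topology}"
  assumes "L1_per u" "h \<in> borel_measurable lebesgue" "bounded S"
    and "\<And>x. h x \<noteq> 0 \<Longrightarrow> x \<in> S" "\<And>x. norm (h x) \<le> C * norm (u x)"
  shows "integrable lebesgue h"
proof -
  obtain N :: nat where S: "S \<subseteq> cbox (- vec N) (vec N)"
    using bounded_subset_cbox_nat[OF assms(3)] .
  have int: "integrable lebesgue (\<lambda>x. \<bar>C\<bar> * norm (indicator (cbox (- vec N) (vec N)) x *\<^sub>R u x))"
    using L1_per_set_integrable_cbox[OF assms(1), of N]
    by (intro integrable_mult_right integrable_norm) (simp add: set_integrable_def)
  have bound: "norm (h x) \<le> norm (\<bar>C\<bar> * norm (indicator (cbox (- vec N) (vec N)) x *\<^sub>R u x))" for x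
  proof -
    have "norm (h x) \<le> \<bar>C\<bar> * norm (u x)"
      using assms(5)[of x] by (meson abs_ge_self mult_right_mono norm_ge_zero order_trans)
    then show ?thesis
      using assms(4)[of x] S by (cases "h x = 0") (auto simp: indicator_def)
  qed
  show ?thesis
    by (rule Bochner_Integration.integrable_bound[OF int]) (use assms(2) bound in auto)
qed

lemma periodic_AE_cellY:
  fixes G :: "real^'d \<Rightarrow> 'b"
  assumes "periodic G" "AE x in lebesgue. x \<in> cellY \<longrightarrow> P (G x)"
  shows "AE x in lebesgue. P (G x)"
proof -
  have cell: "AE x in lebesgue. x \<in> cbox 0 1 \<longrightarrow> P (G x)"
    using AE_cbox_imp_cellY assms(2) by eventually_elim blast
  have each: "AE x in lebesgue. x \<in> cbox (- vec N) (vec N) \<longrightarrow> P (G x)" for N :: nat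
  proof -
    obtain Z :: "(real^'d) set"
      where Z: "finite Z" "Z \<subseteq> lattice" "\<And>x. x \<in> cbox (- vec N) (vec N) \<Longrightarrow> \<exists>z\<in>Z. x - z \<in> cbox 0 1"
      by (rule lattice_cover_cbox[of N]) blast
    have "AE x in lebesgue. - z + x \<in> cbox 0 1 \<longrightarrow> P (G x)" if "z \<in> Z" for z
      using AE_lebesgue_translate[OF cell, of "- z"] periodic_translate(1)[OF assms(1) lattice_uminus]
        Z(2) that by auto
    then have "AE x in lebesgue. \<forall>z\<in>Z. - z + x \<in> cbox 0 1 \<longrightarrow> P (G x)"
      by (rule AE_finite_allI[OF Z(1)])
    then show ?thesis
      by eventually_elim (metis Z(3) diff_conv_add_uminus add.commute)
  qed
  then have "\<forall>N::nat. AE x in lebesgue. x \<in> cbox (- vec N) (vec N) \<longrightarrow> P (G x)"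
    by blast
  then have "AE x in lebesgue. \<forall>N::nat. x \<in> cbox (- vec N) (vec N) \<longrightarrow> P (G x)"
    unfolding AE_all_countable .
  then show ?thesis
  proof eventually_elim
    case (elim x)
    obtain N :: nat where "{x} \<subseteq> cbox (- vec N) (vec N)"
      using bounded_subset_cbox_nat[of "{x}"] by auto
    then show ?case using elim by auto
  qed
qed

section \<open>Periodic functions with constant weak gradient\<close>

lemma continuous_on_lebesgue_measurable:
  "continuous_on UNIV f \<Longrightarrow> f \<in> borel_measurable (lebesgue :: 'a::euclidean_space measure)"
  by (simp add: measurable_completion borel_measurable_continuous_onI)

lemma continuous_bounded_support_bounded:
  fixes f :: "'a::euclidean_space \<Rightarrow> 'b::real_normed_vector"
  assumes "continuous_on UNIV f" "bounded S" "\<And>x. f x \<noteq> 0 \<Longrightarrow> x \<in> S"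
  obtains B where "\<And>x. norm (f x) \<le> B"
proof -
  have "bounded (f ` closure S)"
    using assms(1,2) by (intro compact_imp_bounded compact_continuous_image)
      (auto intro: continuous_on_subset)
  then obtain B where B: "\<forall>y\<in>f ` closure S. norm y \<le> B"
    by (auto simp: bounded_iff)
  have "norm (f x) \<le> max B 0" for x
    using B assms(3)[of x] closure_subset by (cases "f x = 0") force+
  then show ?thesis ..
qed

lemma L1_per_integrable_scaleR_left:
  fixes u :: "real^'d \<Rightarrow> real" and \<phi> :: "real^'d \<Rightarrow> 'c::{euclidean_space}"
  assumes "L1_per u" "continuous_on UNIV \<phi>" "bounded S" "\<And>x. \<phi> x \<noteq> 0 \<Longrightarrow> x \<in> S"
  shows "integrable lebesgue (\<lambda>x. u x *\<^sub>R \<phi> x)"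
proof -
  obtain B where B: "\<And>x. norm (\<phi> x) \<le> B"
    using continuous_bounded_support_bounded[OF assms(2-4)] by metis
  show ?thesis
  proof (rule L1_per_integrable_bounded_support[OF assms(1) _ assms(3)])
    show "(\<lambda>x. u x *\<^sub>R \<phi> x) \<in> borel_measurable lebesgue"
      using assms(1) continuous_on_lebesgue_measurable[OF assms(2)]
      by (intro borel_measurable_scaleR) (simp_all add: L1_per_def)
    show "u x *\<^sub>R \<phi> x \<noteq> 0 \<Longrightarrow> x \<in> S" for x
      using assms(4) by auto
    show "norm (u x *\<^sub>R \<phi> x) \<le> B * norm (u x)" for x
      using mult_left_mono[OF B[of x] abs_ge_zero[of "u x"]] by (simp add: mult.commute)
  qed
qed

lemma L1_per_integrable_scaleR_right:
  fixes \<phi> :: "real^'d \<Rightarrow> real" and G :: "real^'d \<Rightarrow> 'b::{banach, second_countable_topology}"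
  assumes "L1_per G" "continuous_on UNIV \<phi>" "bounded S" "\<And>x. \<phi> x \<noteq> 0 \<Longrightarrow> x \<in> S"
  shows "integrable lebesgue (\<lambda>x. \<phi> x *\<^sub>R G x)"
proof -
  obtain B where B: "\<And>x. norm (\<phi> x) \<le> B"
    using continuous_bounded_support_bounded[OF assms(2-4)] by metis
  show ?thesis
  proof (rule L1_per_integrable_bounded_support[OF assms(1) _ assms(3)])
    show "(\<lambda>x. \<phi> x *\<^sub>R G x) \<in> borel_measurable lebesgue"
      using assms(1) continuous_on_lebesgue_measurable[OF assms(2)]
      by (intro borel_measurable_scaleR) (simp_all add: L1_per_def)
    show "\<phi> x *\<^sub>R G x \<noteq> 0 \<Longrightarrow> x \<in> S" for x
      using assms(4) by auto
    show "norm (\<phi> x *\<^sub>R G x) \<le> B * norm (G x)" for x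
      using mult_right_mono[OF B[of x] norm_ge_zero[of "G x"]] by simp
  qed
qed

lemma C1c_continuous: "C1c v g \<Longrightarrow> continuous_on UNIV v \<and> continuous_on UNIV g"
  by (auto simp: C1c_def C1_grad_def intro!: has_derivative_continuous_on)

lemma C1c_grad_support:
  assumes "C1c v g" "\<And>x. R < norm x \<Longrightarrow> v x = 0" "R < norm x"
  shows "g x = 0"
proof -
  have "(v has_derivative (\<lambda>h. g x \<bullet> h)) (at x)"
    using assms(1) by (simp add: C1c_def C1_grad_def)
  moreover have "(v has_derivative (\<lambda>h. 0)) (at x)"
    by (rule has_derivative_transform_within_open[where f="\<lambda>_. 0" and s="{y. R < norm y}"])
       (use assms(2,3) in \<open>auto intro: open_Collect_less continuous_intros\<close>)
  ultimately have "(\<lambda>h. g x \<bullet> h) = (\<lambda>h. 0)"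
    by (rule has_derivative_unique)
  then have "g x \<bullet> g x = 0"
    by meson
  then show ?thesis by simp
qed

lemma C1c_support:
  assumes "C1c v g"
  obtains R where "\<And>x. v x \<noteq> 0 \<Longrightarrow> x \<in> cball 0 R" "\<And>x. g x \<noteq> 0 \<Longrightarrow> x \<in> cball 0 R"
proof -
  obtain R where R: "\<And>x. R < norm x \<Longrightarrow> v x = 0"
    using assms by (auto simp: C1c_def)
  then show ?thesis
    using C1c_grad_support[OF assms R] by (intro that[of R]) (force simp: not_less)+
qed

lemma weak_grad_sum:
  fixes u :: "'i \<Rightarrow> real^'d \<Rightarrow> real" and g :: "'i \<Rightarrow> real^'d \<Rightarrow> real^'d"
  assumes "finite I"
    and "\<And>i. i \<in> I \<Longrightarrow> L1_per (u i)" "\<And>i. i \<in> I \<Longrightarrow> L1_per (g i)"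
    and "\<And>i. i \<in> I \<Longrightarrow> weak_grad (u i) (g i)"
  shows "weak_grad (\<lambda>x. \<Sum>i\<in>I. c i * u i x) (\<lambda>x. \<Sum>i\<in>I. c i *\<^sub>R g i x)"
  unfolding weak_grad_def
proof (intro allI impI)
  fix \<psi> :: "real^'d \<Rightarrow> real" and g\<psi> :: "real^'d \<Rightarrow> real^'d"
  assume test: "C1c \<psi> g\<psi>"
  obtain R where supp: "\<And>x. \<psi> x \<noteq> 0 \<Longrightarrow> x \<in> cball 0 R" "\<And>x. g\<psi> x \<noteq> 0 \<Longrightarrow> x \<in> cball 0 R"
    using C1c_support[OF test] by blast
  note cont = C1c_continuous[OF test]
  have int_u: "integrable lebesgue (\<lambda>x. u i x *\<^sub>R g\<psi> x)" if "i \<in> I" for i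
    using L1_per_integrable_scaleR_left[OF assms(2)[OF that] _ bounded_cball supp(2)] cont by blast
  have int_g: "integrable lebesgue (\<lambda>x. \<psi> x *\<^sub>R g i x)" if "i \<in> I" for i
    using L1_per_integrable_scaleR_right[OF assms(3)[OF that] _ bounded_cball supp(1)] cont by blast
  have "(\<integral>x. (\<Sum>i\<in>I. c i * u i x) *\<^sub>R g\<psi> x \<partial>lebesgue) = (\<integral>x. (\<Sum>i\<in>I. c i *\<^sub>R (u i x *\<^sub>R g\<psi> x)) \<partial>lebesgue)"
    by (simp add: scaleR_sum_left)
  also have "\<dots> = (\<Sum>i\<in>I. c i *\<^sub>R (\<integral>x. u i x *\<^sub>R g\<psi> x \<partial>lebesgue))"
    using int_u by (simp del: scaleR_scaleR)
  also have "\<dots> = (\<Sum>i\<in>I. c i *\<^sub>R - (\<integral>x. \<psi> x *\<^sub>R g i x \<partial>lebesgue))"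
    using assms(4) test by (simp add: weak_grad_def)
  also have "\<dots> = - (\<integral>x. (\<Sum>i\<in>I. c i *\<^sub>R (\<psi> x *\<^sub>R g i x)) \<partial>lebesgue)"
    using int_g by (simp add: sum_negf del: scaleR_scaleR)
  also have "\<dots> = - (\<integral>x. \<psi> x *\<^sub>R (\<Sum>i\<in>I. c i *\<^sub>R g i x) \<partial>lebesgue)"
    by (simp add: scaleR_sum_right mult.commute)
  finally show "(\<integral>x. (\<Sum>i\<in>I. c i * u i x) *\<^sub>R g\<psi> x \<partial>lebesgue) = - (\<integral>x. \<psi> x *\<^sub>R (\<Sum>i\<in>I. c i *\<^sub>R g i x) \<partial>lebesgue)" .
qed

lemma L1_per_integral_bump_grad_nth:
  fixes u :: "real^'d \<Rightarrow> real"
  assumes u: "L1_per u"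
  shows "(\<integral>x. u x *\<^sub>R bump_grad x \<partial>lebesgue) $ k = 0"
proof -
  define e :: "real^'d" where "e = axis k 1"
  obtain R where "\<And>x. bump_grad x \<noteq> (0 :: real^'d) \<Longrightarrow> x \<in> cball 0 R"
    using C1c_support[OF C1c_bump] by metis
  then have int_grad: "integrable lebesgue (\<lambda>x. u x *\<^sub>R bump_grad x)"
    by (rule L1_per_integrable_scaleR_left[OF u continuous_on_bump_grad bounded_cball])
  have int_hat: "integrable lebesgue (\<lambda>x. u x * hat_bump k x)"
    using L1_per_integrable_scaleR_left[OF u continuous_on_hat_bump bounded_cbox hat_bump_support] by simp
  have cont_shift: "continuous_on UNIV (\<lambda>x. hat_bump k (x - e))"
    by (intro continuous_on_compose2[OF continuous_on_hat_bump] continuous_intros) auto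
  have "bounded ((+) e ` cbox 0 (vec 3))"
    by (rule bounded_translation) simp
  moreover have "hat_bump k (x - e) \<noteq> 0 \<Longrightarrow> x \<in> (+) e ` cbox 0 (vec 3)" for x
    using hat_bump_support[of k "x - e"] by (auto simp: image_iff intro!: bexI[of _ "x - e"])
  ultimately have int_shift: "integrable lebesgue (\<lambda>x. u x * hat_bump k (x - e))"
    using L1_per_integrable_scaleR_left[OF u cont_shift] by simp
  have "(\<integral>x. u x *\<^sub>R bump_grad x \<partial>lebesgue) $ k = (\<integral>x. u x * hat_bump k x - u x * hat_bump k (x - e) \<partial>lebesgue)"
    using integral_inner_left[OF int_grad, of "axis k 1"]
    by (simp add: inner_axis bump_grad_nth e_def right_diff_distrib)
  also have "\<dots> = (\<integral>x. u x * hat_bump k x \<partial>lebesgue) - (\<integral>x. u x * hat_bump k (x - e) \<partial>lebesgue)"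
    by (rule Bochner_Integration.integral_diff[OF int_hat int_shift])
  also have "(\<integral>x. u x * hat_bump k (x - e) \<partial>lebesgue) = (\<integral>x. u (e + x) * hat_bump k (e + x - e) \<partial>lebesgue)"
    by (rule integral_lebesgue_translate[symmetric]) (use int_shift in simp)
  also have "\<dots> = (\<integral>x. u x * hat_bump k x \<partial>lebesgue)"
    using periodic_translate(1)[OF _ axis_in_lattice, of u] u by (simp add: e_def L1_per_def)
  finally show ?thesis
    by simp
qed

lemma L1_per_weak_grad_const_eq_0:
  fixes u :: "real^'d \<Rightarrow> real" and G :: "real^'d \<Rightarrow> real^'d"
  assumes u: "L1_per u" and G: "L1_per G" and "weak_grad u G"
    and const: "AE x in lebesgue. x \<in> cellY \<longrightarrow> G x = c"
  shows "c = 0"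
proof -
  have "AE x in lebesgue. G x = c"
    using periodic_AE_cellY[of G "\<lambda>y. y = c"] G const by (simp add: L1_per_def)
  then have "(\<integral>x. bump x *\<^sub>R G x \<partial>lebesgue) = (\<integral>x. bump (x :: real^'d) *\<^sub>R c \<partial>lebesgue)"
    using G continuous_on_lebesgue_measurable[OF continuous_on_bump]
    by (intro Bochner_Integration.integral_cong_AE borel_measurable_scaleR borel_measurable_const)
       (auto simp: L1_per_def elim!: eventually_mono)
  also have "\<dots> = (\<integral>x. bump (x :: real^'d) \<partial>lebesgue) *\<^sub>R c"
    by (rule integral_scaleR_left[OF integrable_bump])
  finally have "(\<integral>x. u x *\<^sub>R bump_grad x \<partial>lebesgue) = - ((\<integral>x. bump (x :: real^'d) \<partial>lebesgue) *\<^sub>R c)"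
    using weak_grad_def[THEN iffD1, OF assms(3), rule_format, OF C1c_bump] by simp
  then have "(\<integral>x. bump (x :: real^'d) \<partial>lebesgue) * c $ k = 0" for k
    using L1_per_integral_bump_grad_nth[OF u, of k] by simp
  moreover have "0 < (\<integral>x. bump (x :: real^'d) \<partial>lebesgue)"
    by (rule integral_bump_pos)
  ultimately show ?thesis
    by (simp add: vec_eq_iff)
qed

section \<open>Square integrability on the cell\<close>

lemma norm_matrix_vector_le:
  fixes A :: "real^'n^'m"
  shows "norm (A *v x) \<le> real CARD('m) * real CARD('n) * norm A * norm x"
proof -
  have "\<bar>A$i$j\<bar> \<le> norm A" for i j
    using component_le_norm_cart[of "A$i" j] Finite_Cartesian_Product.norm_nth_le[of A i] by linarith
  then have "onorm ((*v) A) \<le> real CARD('m) * real CARD('n) * norm A"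
    by (rule onorm_le_matrix_component)
  then show ?thesis
    using onorm[OF matrix_vector_mul_bounded_linear, of A x] by (meson mult_right_mono norm_ge_zero order_trans)
qed

lemma set_integrable_bounded_by_L2_product:
  fixes h :: "'a \<Rightarrow> real" and v w :: "'a \<Rightarrow> 'b::real_normed_vector"
  assumes "set_borel_measurable M A h"
    and "AE y in M. y \<in> A \<longrightarrow> \<bar>h y\<bar> \<le> B * (norm (v y) * norm (w y))"
    and "set_integrable M A (\<lambda>y. (norm (v y))\<^sup>2)" "set_integrable M A (\<lambda>y. (norm (w y))\<^sup>2)"
  shows "set_integrable M A h"
proof (rule set_integrable_bound[OF _ assms(1)])
  show "set_integrable M A (\<lambda>y. \<bar>B\<bar> * ((norm (v y))\<^sup>2 + (norm (w y))\<^sup>2))"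
    using assms(3,4) by (intro set_integrable_mult_right set_integral_add)
  show "AE y in M. y \<in> A \<longrightarrow> norm (h y) \<le> norm (\<bar>B\<bar> * ((norm (v y))\<^sup>2 + (norm (w y))\<^sup>2))"
    using assms(2)
  proof eventually_elim
    case (elim y)
    have "0 \<le> norm (v y) * norm (w y)"
      by simp
    moreover have "2 * norm (v y) * norm (w y) \<le> (norm (v y))\<^sup>2 + (norm (w y))\<^sup>2"
      by (rule sum_squares_bound)
    ultimately have "norm (v y) * norm (w y) \<le> (norm (v y))\<^sup>2 + (norm (w y))\<^sup>2"
      by linarith
    then have "\<bar>B\<bar> * (norm (v y) * norm (w y)) \<le> \<bar>B\<bar> * ((norm (v y))\<^sup>2 + (norm (w y))\<^sup>2)"
      by (rule mult_left_mono) simp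
    moreover have "B * (norm (v y) * norm (w y)) \<le> \<bar>B\<bar> * (norm (v y) * norm (w y))"
      by (rule mult_right_mono) auto
    ultimately show ?case
      using elim by auto
  qed
qed

lemma set_integrable_square_add:
  fixes f g :: "'a \<Rightarrow> 'b::{real_normed_vector, second_countable_topology}"
  assumes "A \<in> sets M" "f \<in> borel_measurable M" "g \<in> borel_measurable M"
    and "set_integrable M A (\<lambda>y. (norm (f y))\<^sup>2)" "set_integrable M A (\<lambda>y. (norm (g y))\<^sup>2)"
  shows "set_integrable M A (\<lambda>y. (norm (f y + g y))\<^sup>2)"
proof (rule set_integrable_bound[of _ _ "\<lambda>y. 2 * (norm (f y))\<^sup>2 + 2 * (norm (g y))\<^sup>2"])
  show "set_integrable M A (\<lambda>y. 2 * (norm (f y))\<^sup>2 + 2 * (norm (g y))\<^sup>2)"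
    using assms(4,5) by (intro set_integral_add set_integrable_mult_right)
  show "set_borel_measurable M A (\<lambda>y. (norm (f y + g y))\<^sup>2)"
    unfolding set_borel_measurable_def using assms(1-3) by measurable
  have "(norm (f y + g y))\<^sup>2 \<le> 2 * (norm (f y))\<^sup>2 + 2 * (norm (g y))\<^sup>2" for y
  proof -
    have "(norm (f y + g y))\<^sup>2 \<le> (norm (f y) + norm (g y))\<^sup>2"
      by (simp add: norm_triangle_ineq power_mono)
    also have "\<dots> \<le> 2 * (norm (f y))\<^sup>2 + 2 * (norm (g y))\<^sup>2"
      using sum_squares_ge_zero[of "norm (f y) - norm (g y)" 0] by (simp add: power2_eq_square algebra_simps)
    finally show ?thesis .
  qed
  then show "AE y in M. y \<in> A \<longrightarrow> norm ((norm (f y + g y))\<^sup>2) \<le> norm (2 * (norm (f y))\<^sup>2 + 2 * (norm (g y))\<^sup>2)"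
    by simp
qed

lemma set_integrable_const_finite:
  assumes "A \<in> sets M" "emeasure M A < \<infinity>"
  shows "set_integrable M A (\<lambda>_. c :: real)"
  using assms unfolding set_integrable_def by (intro integrable_scaleR_left integrable_real_indicator)

lemma set_integrable_L2_imp_L1:
  fixes f :: "'a \<Rightarrow> 'b::{banach, second_countable_topology}"
  assumes "A \<in> sets M" "emeasure M A < \<infinity>" "f \<in> borel_measurable M"
    and "set_integrable M A (\<lambda>y. (norm (f y))\<^sup>2)"
  shows "set_integrable M A f"
proof (rule set_integrable_bound[of _ _ "\<lambda>y. (norm (f y))\<^sup>2 + 1"])
  show "set_integrable M A (\<lambda>y. (norm (f y))\<^sup>2 + 1)"
    using assms(4) set_integrable_const_finite[OF assms(1,2)] by (rule set_integral_add)
  show "set_borel_measurable M A f"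
    unfolding set_borel_measurable_def using assms(1,3) by measurable
  have "norm (f y) \<le> (norm (f y))\<^sup>2 + 1" for y
  proof -
    have "2 * norm (f y) \<le> (norm (f y))\<^sup>2 + 1"
      using sum_squares_bound[of "norm (f y)" 1] by simp
    then show ?thesis
      using norm_ge_zero[of "f y"] by linarith
  qed
  then show "AE y in M. y \<in> A \<longrightarrow> norm (f y) \<le> norm ((norm (f y))\<^sup>2 + 1)"
    by simp
qed

lemma cellY_finite_measure: "cellY \<in> sets lebesgue" "emeasure lebesgue cellY < \<infinity>"
  unfolding cellY_def using emeasure_lborel_box_finite by auto

lemma H1_per_imp_L1_per:
  assumes "H1_per u g"
  shows "L1_per u" "L1_per g"
proof -
  have H: "u \<in> borel_measurable lebesgue" "g \<in> borel_measurable lebesgue" "periodic u" "periodic g"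
    "set_integrable lebesgue cellY (\<lambda>x. (norm (u x))\<^sup>2)" "set_integrable lebesgue cellY (\<lambda>x. (norm (g x))\<^sup>2)"
    using assms by (simp_all add: H1_per_def)
  show "L1_per u" "L1_per g"
    unfolding L1_per_def using H set_integrable_L2_imp_L1[OF cellY_finite_measure] by blast+
qed

lemma L1_per_sum:
  fixes u :: "'i \<Rightarrow> real^'d \<Rightarrow> 'b::{banach, second_countable_topology}"
  assumes "finite I" "\<And>i. i \<in> I \<Longrightarrow> L1_per (u i)"
  shows "L1_per (\<lambda>x. \<Sum>i\<in>I. c i *\<^sub>R u i x)"
proof -
  have "periodic (\<lambda>x. \<Sum>i\<in>I. c i *\<^sub>R u i x)"
    using assms(2) by (simp add: L1_per_def periodic_def)
  moreover have "set_integrable lebesgue cellY (\<lambda>x. c i *\<^sub>R u i x)" if "i \<in> I" for i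
    using assms(2)[OF that] by (simp add: L1_per_def)
  then have "set_integrable lebesgue cellY (\<lambda>x. \<Sum>i\<in>I. c i *\<^sub>R u i x)"
    unfolding set_integrable_def scaleR_sum_right by (intro Bochner_Integration.integrable_sum) auto
  moreover have "(\<lambda>x. \<Sum>i\<in>I. c i *\<^sub>R u i x) \<in> borel_measurable lebesgue"
    by (rule borel_measurable_sum, rule borel_measurable_scaleR[OF borel_measurable_const])
       (use assms(2) in \<open>simp add: L1_per_def\<close>)
  ultimately show ?thesis
    by (simp add: L1_per_def)
qed

lemma matrix_vector_mult_sum:
  fixes A :: "real^'n^'m"
  shows "A *v (\<Sum>i\<in>I. c i *\<^sub>R u i) = (\<Sum>i\<in>I. c i *\<^sub>R (A *v u i))"
  by (induct I rule: infinite_finite_induct) (auto simp: matrix_vector_right_distrib matrix_vector_mult_scaleR)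

lemma quadratic_form_sum:
  fixes A :: "real^'n^'n"
  assumes "finite I"
  shows "(A *v (\<Sum>i\<in>I. c i *\<^sub>R u i)) \<bullet> (\<Sum>j\<in>I. c j *\<^sub>R u j)
    = (\<Sum>i\<in>I. \<Sum>j\<in>I. c i * c j * ((A *v u i) \<bullet> u j))"
  by (simp add: matrix_vector_mult_sum inner_sum_left inner_sum_right sum_distrib_left mult_ac)
     (subst sum.swap, simp add: mult_ac)

lemma square_sum_diff:
  fixes c x y :: "'i \<Rightarrow> real"
  shows "P * ((\<Sum>i\<in>I. c i * x i) - (\<Sum>i\<in>I. c i * y i))\<^sup>2
    = (\<Sum>i\<in>I. \<Sum>j\<in>I. c i * c j * (P * (x i - y i) * (x j - y j)))"
proof -
  have "(\<Sum>i\<in>I. c i * x i) - (\<Sum>i\<in>I. c i * y i) = (\<Sum>i\<in>I. c i * (x i - y i))"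
    by (simp add: sum_subtractf right_diff_distrib)
  then show ?thesis
    by (simp add: power2_eq_square sum_product sum_distrib_left mult_ac)
qed

lemma inner_matrix_vector_expand: "\<xi> \<bullet> (H *v \<xi>) = (\<Sum>i\<in>UNIV. \<Sum>j\<in>UNIV. \<xi>$i * \<xi>$j * H$i$j)"
  by (simp add: inner_vec_def matrix_vector_mult_def sum_distrib_left mult_ac)

lemma symmetric_matrix_inner: "transpose A = A \<Longrightarrow> (A *v v) \<bullet> w = (A *v w) \<bullet> (v :: real^'n)"
  by (metis dot_lmul_matrix inner_commute transpose_matrix_vector)

lemma sum_axis_scaleR: "(\<Sum>i\<in>UNIV. x$i *\<^sub>R axis i (1::real)) = x"
  by (simp add: vec_eq_iff axis_def if_distrib cong: if_cong)

lemma set_integral_double_sum: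
  fixes f :: "'i \<Rightarrow> 'j \<Rightarrow> 'a \<Rightarrow> real"
  assumes "finite I" "finite J" "\<And>i j. i \<in> I \<Longrightarrow> j \<in> J \<Longrightarrow> set_integrable M A (f i j)"
  shows "(\<integral>y\<in>A. (\<Sum>i\<in>I. \<Sum>j\<in>J. c i j * f i j y) \<partial>M) = (\<Sum>i\<in>I. \<Sum>j\<in>J. c i j * (\<integral>y\<in>A. f i j y \<partial>M))"
proof -
  have int: "integrable M (\<lambda>y. indicator A y *\<^sub>R (c i j * f i j y))" if "i \<in> I" "j \<in> J" for i j
    using integrable_mult_right[OF assms(3)[OF that, unfolded set_integrable_def], of "c i j"]
    by (simp add: mult.left_commute)
  have "(\<integral>y\<in>A. (\<Sum>i\<in>I. \<Sum>j\<in>J. c i j * f i j y) \<partial>M)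
      = (\<integral>y. (\<Sum>i\<in>I. \<Sum>j\<in>J. indicator A y *\<^sub>R (c i j * f i j y)) \<partial>M)"
    by (simp add: set_lebesgue_integral_def sum_distrib_left)
  also have "\<dots> = (\<Sum>i\<in>I. \<Sum>j\<in>J. (\<integral>y. indicator A y *\<^sub>R (c i j * f i j y) \<partial>M))"
    using int by (simp add: Bochner_Integration.integral_sum Bochner_Integration.integrable_sum)
  also have "\<dots> = (\<Sum>i\<in>I. \<Sum>j\<in>J. c i j * (\<integral>y\<in>A. f i j y \<partial>M))"
    by (simp add: set_lebesgue_integral_def mult.left_commute[of _ "c _ _"])
  finally show ?thesis .
qed

lemma set_integral_nonneg_AE:
  fixes f :: "'a \<Rightarrow> real"
  assumes "AE x in M. x \<in> A \<longrightarrow> 0 \<le> f x"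
  shows "0 \<le> (\<integral>x\<in>A. f x \<partial>M)"
  unfolding set_lebesgue_integral_def
  by (rule integral_nonneg_AE) (use assms in \<open>auto simp: indicator_def elim!: eventually_mono\<close>)

lemma set_integral_nonneg_eq_0_AE:
  fixes f :: "'a \<Rightarrow> real"
  assumes "set_integrable M A f" "AE x in M. x \<in> A \<longrightarrow> 0 \<le> f x" "(\<integral>x\<in>A. f x \<partial>M) = 0"
  shows "AE x in M. x \<in> A \<longrightarrow> f x = 0"
proof -
  have "AE x in M. indicator A x * f x = 0"
    using assms unfolding set_lebesgue_integral_def set_integrable_def
    by (subst integral_nonneg_eq_0_iff_AE[symmetric]) (auto simp: indicator_def elim!: eventually_mono)
  then show ?thesis by (auto simp: indicator_def elim!: eventually_mono)
qed

lemma AE_bounded_scaleR: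
  fixes f :: "'a \<Rightarrow> real" and g :: "'a \<Rightarrow> 'b::real_normed_vector"
  assumes "\<exists>B. AE x in M. norm (f x) \<le> B" "\<exists>B. AE x in M. norm (g x) \<le> B"
  shows "\<exists>B. AE x in M. norm (f x *\<^sub>R g x) \<le> B"
proof -
  obtain Bf Bg where "AE x in M. norm (f x) \<le> Bf" "AE x in M. norm (g x) \<le> Bg"
    using assms by blast
  then have "AE x in M. norm (f x *\<^sub>R g x) \<le> Bf * Bg"
    by eventually_elim (simp add: mult_mono')
  then show ?thesis ..
qed

lemma Linf_per_bounded: "Linf_per f \<Longrightarrow> \<exists>B. AE y in lebesgue. norm (f y) \<le> B"
  by (simp add: Linf_per_def)

section \<open>The homogenized matrix\<close>

lemma sum_sum_mult_sum_swap:
  "(\<Sum>i\<in>I. \<Sum>j\<in>J. x i j * (\<Sum>a\<in>K. F a i j)) = (\<Sum>a\<in>K. \<Sum>i\<in>I. \<Sum>j\<in>J. x i j * (F a i j :: real))"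
proof -
  have "(\<Sum>i\<in>I. \<Sum>j\<in>J. x i j * (\<Sum>a\<in>K. F a i j)) = (\<Sum>i\<in>I. \<Sum>a\<in>K. \<Sum>j\<in>J. x i j * F a i j)"
    by (simp add: sum_distrib_left) (rule sum.cong[OF refl], rule sum.swap)
  also have "\<dots> = (\<Sum>a\<in>K. \<Sum>i\<in>I. \<Sum>j\<in>J. x i j * F a i j)"
    by (rule sum.swap)
  finally show ?thesis .
qed

declare cellY_finite_measure(1) [measurable]

lemma borel_measurable_matrix_vector_mult [measurable (raw)]:
  fixes A :: "'a \<Rightarrow> real^'n^'m"
  assumes "A \<in> borel_measurable M" "v \<in> borel_measurable M"
  shows "(\<lambda>y. A y *v v y) \<in> borel_measurable M"
proof -
  have "continuous_on UNIV (\<lambda>p :: (real^'n^'m) \<times> (real^'n). fst p *v snd p)"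
    unfolding matrix_vector_mult_def by (intro continuous_intros continuous_on_vec_lambda)
  from borel_measurable_continuous_on[OF this, of "\<lambda>y. (A y, v y)"] show ?thesis
    using assms by simp
qed

locale cell_coefficients =
  fixes Dm :: "'n::finite \<Rightarrow> real^'d::finite \<Rightarrow> real^'d^'d"
    and PP :: "'n \<Rightarrow> 'n \<Rightarrow> real^'d \<Rightarrow> real"
    and phi phis :: "'n \<Rightarrow> real^'d \<Rightarrow> real"
    and om :: "'d \<Rightarrow> 'n \<Rightarrow> real^'d \<Rightarrow> real"
    and gom :: "'d \<Rightarrow> 'n \<Rightarrow> real^'d \<Rightarrow> real^'d"
  assumes Dm_Linf: "\<And>a. Linf_per (Dm a)"
    and Dm_sym: "\<And>a. AE y in lebesgue. transpose (Dm a y) = Dm a y"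
    and Dm_coercive: "\<And>a. \<exists>c>0. AE y in lebesgue. \<forall>\<xi>. (Dm a y *v \<xi>) \<bullet> \<xi> \<ge> c * (norm \<xi>)\<^sup>2"
    and PP_Linf: "\<And>a c. Linf_per (PP a c)"
    and PP_offdiag: "\<And>a c. a \<noteq> c \<Longrightarrow> AE y in lebesgue. PP a c y \<le> 0"
    and phi_Linf: "\<And>a. Linf_per (phi a)" and phi_pos: "\<And>a. AE y in lebesgue. phi a y > 0"
    and phis_Linf: "\<And>a. Linf_per (phis a)" and phis_pos: "\<And>a. AE y in lebesgue. phis a y > 0"
    and om_H1: "\<And>i a. H1_per (om i a) (gom i a)"
begin

text \<open>In the paper's notation \<open>corr \<xi> a = \<xi> \<bullet> \<omega>\<^sub>a\<close> and \<open>grad_corr \<xi> a + \<xi>\<close> is the gradient of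
  \<open>\<xi> \<bullet> (\<omega>\<^sub>a + y)\<close>.\<close>

definition corr :: "real^'d \<Rightarrow> 'n \<Rightarrow> real^'d \<Rightarrow> real" where
  "corr \<xi> a y = (\<Sum>i\<in>UNIV. \<xi>$i * om i a y)"

definition grad_corr :: "real^'d \<Rightarrow> 'n \<Rightarrow> real^'d \<Rightarrow> real^'d" where
  "grad_corr \<xi> a y = (\<Sum>i\<in>UNIV. \<xi>$i *\<^sub>R gom i a y)"

lemma measurable_coefficients [measurable]:
  "Dm a \<in> borel_measurable lebesgue" "PP a c \<in> borel_measurable lebesgue"
  "phi a \<in> borel_measurable lebesgue" "phis a \<in> borel_measurable lebesgue"
  "om i a \<in> borel_measurable lebesgue" "gom i a \<in> borel_measurable lebesgue"
  using Dm_Linf PP_Linf phi_Linf phis_Linf om_H1 by (simp_all add: Linf_per_def H1_per_def)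

lemma Dtil_bounded: "\<exists>B. AE y in lebesgue. norm (Dtil Dm phi phis a y) \<le> B"
  using AE_bounded_scaleR[OF AE_bounded_scaleR[OF Linf_per_bounded[OF phi_Linf] Linf_per_bounded[OF phis_Linf]]
      Linf_per_bounded[OF Dm_Linf]]
  by (simp add: Dtil_def)

lemma coupling_bounded: "\<exists>B. AE y in lebesgue. norm (phis a y * phi c y * PP a c y) \<le> B"
  using AE_bounded_scaleR[OF AE_bounded_scaleR[OF Linf_per_bounded[OF phis_Linf] Linf_per_bounded[OF phi_Linf]]
      Linf_per_bounded[OF PP_Linf]]
  by simp

lemma square_integrable_cell_grad: "set_integrable lebesgue cellY (\<lambda>y. (norm (gom i a y + axis i 1))\<^sup>2)"
  using om_H1[of i a] set_integrable_const_finite[OF cellY_finite_measure]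
  by (intro set_integrable_square_add cellY_finite_measure) (auto simp: H1_per_def)

lemma square_integrable_corr_diff: "set_integrable lebesgue cellY (\<lambda>y. (norm (om i a y - om i c y))\<^sup>2)"
  using om_H1[of i a] om_H1[of i c] set_integrable_square_add[of cellY lebesgue "om i a" "\<lambda>y. - om i c y"]
  by (simp add: H1_per_def cellY_finite_measure)

lemma energy_integrable:
  "set_integrable lebesgue cellY (\<lambda>y. (Dtil Dm phi phis a y *v (gom i a y + axis i 1)) \<bullet> (gom j a y + axis j 1))"
proof -
  obtain B where B: "AE y in lebesgue. norm (Dtil Dm phi phis a y) \<le> B"
    using Dtil_bounded by blast
  show ?thesis
  proof (rule set_integrable_bounded_by_L2_product[OF _ _ square_integrable_cell_grad square_integrable_cell_grad])
    show "set_borel_measurable lebesgue cellY (\<lambda>y. (Dtil Dm phi phis a y *v (gom i a y + axis i 1)) \<bullet> (gom j a y + axis j 1))"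
      unfolding set_borel_measurable_def Dtil_def by measurable
    show "AE y in lebesgue. y \<in> cellY \<longrightarrow> \<bar>(Dtil Dm phi phis a y *v (gom i a y + axis i 1)) \<bullet> (gom j a y + axis j 1)\<bar>
        \<le> real CARD('d) * real CARD('d) * B * (norm (gom i a y + axis i 1) * norm (gom j a y + axis j 1))"
      using B
    proof eventually_elim
      case (elim y)
      let ?A = "Dtil Dm phi phis a y" and ?v = "gom i a y + axis i 1" and ?w = "gom j a y + axis j 1"
      have "\<bar>(?A *v ?v) \<bullet> ?w\<bar> \<le> norm (?A *v ?v) * norm ?w"
        by (rule Cauchy_Schwarz_ineq2)
      also have "\<dots> \<le> real CARD('d) * real CARD('d) * norm ?A * norm ?v * norm ?w"
        by (rule mult_right_mono[OF norm_matrix_vector_le norm_ge_zero])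
      also have "\<dots> \<le> real CARD('d) * real CARD('d) * B * (norm ?v * norm ?w)"
        using elim by (simp add: mult.assoc mult_left_mono mult_right_mono)
      finally show ?case by simp
    qed
  qed
qed

lemma coupling_integrable:
  "set_integrable lebesgue cellY
     (\<lambda>y. phis a y * phi c y * PP a c y * (om i a y - om i c y) * (om j a y - om j c y))"
proof -
  obtain B where B: "AE y in lebesgue. norm (phis a y * phi c y * PP a c y) \<le> B"
    using coupling_bounded by blast
  show ?thesis
  proof (rule set_integrable_bounded_by_L2_product[OF _ _ square_integrable_corr_diff square_integrable_corr_diff])
    show "set_borel_measurable lebesgue cellY
        (\<lambda>y. phis a y * phi c y * PP a c y * (om i a y - om i c y) * (om j a y - om j c y))"
      unfolding set_borel_measurable_def by measurable
    show "AE y in lebesgue. y \<in> cellY \<longrightarrow> \<bar>phis a y * phi c y * PP a c y * (om i a y - om i c y) * (om j a y - om j c y)\<bar>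
        \<le> B * (norm (om i a y - om i c y) * norm (om j a y - om j c y))"
      using B
    proof eventually_elim
      case (elim y)
      have "\<bar>phis a y * phi c y * PP a c y\<bar> * (\<bar>om i a y - om i c y\<bar> * \<bar>om j a y - om j c y\<bar>)
          \<le> B * (\<bar>om i a y - om i c y\<bar> * \<bar>om j a y - om j c y\<bar>)"
        using elim by (intro mult_right_mono) auto
      then show ?case
        by (simp add: abs_mult mult.assoc)
    qed
  qed
qed

lemma homD_symmetric: "transpose (homD Dm PP phi phis om gom) = homD Dm PP phi phis om gom"
proof -
  have "(\<integral>y\<in>cellY. (Dtil Dm phi phis a y *v (gom j a y + axis j 1)) \<bullet> (gom i a y + axis i 1) \<partial>lebesgue)
      = (\<integral>y\<in>cellY. (Dtil Dm phi phis a y *v (gom i a y + axis i 1)) \<bullet> (gom j a y + axis j 1) \<partial>lebesgue)"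
    for i j a
    by (rule set_lebesgue_integral_cong_AE)
       (use Dm_sym[of a] in \<open>auto simp: Dtil_def symmetric_matrix_inner transpose_scalar elim!: eventually_mono\<close>)
  then show ?thesis
    by (simp add: vec_eq_iff transpose_def homD_def mult_ac)
qed

lemma homD_quadratic_form:
  "\<xi> \<bullet> (homD Dm PP phi phis om gom *v \<xi>) =
     (\<Sum>a\<in>UNIV. \<integral>y\<in>cellY. (Dtil Dm phi phis a y *v (grad_corr \<xi> a y + \<xi>)) \<bullet> (grad_corr \<xi> a y + \<xi>) \<partial>lebesgue)
     - 1/2 * (\<Sum>a\<in>UNIV. \<Sum>c\<in>UNIV. \<integral>y\<in>cellY. phis a y * phi c y * PP a c y * (corr \<xi> a y - corr \<xi> c y)\<^sup>2 \<partial>lebesgue)"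
proof -
  define E where "E a i j = (\<integral>y\<in>cellY. (Dtil Dm phi phis a y *v (gom i a y + axis i 1)) \<bullet> (gom j a y + axis j 1) \<partial>lebesgue)"
    for a i j
  define C where "C a c i j = (\<integral>y\<in>cellY. phis a y * phi c y * PP a c y * (om i a y - om i c y) * (om j a y - om j c y) \<partial>lebesgue)"
    for a c i j
  have energy: "(\<Sum>i\<in>UNIV. \<Sum>j\<in>UNIV. \<xi>$i * \<xi>$j * E a i j)
      = (\<integral>y\<in>cellY. (Dtil Dm phi phis a y *v (grad_corr \<xi> a y + \<xi>)) \<bullet> (grad_corr \<xi> a y + \<xi>) \<partial>lebesgue)" for a
  proof -
    have "grad_corr \<xi> a y + \<xi> = (\<Sum>i\<in>UNIV. \<xi>$i *\<^sub>R (gom i a y + axis i 1))" for y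
      by (simp add: grad_corr_def scaleR_add_right sum.distrib sum_axis_scaleR)
    then show ?thesis
      by (simp add: quadratic_form_sum E_def set_integral_double_sum energy_integrable)
  qed
  have coupling: "(\<Sum>i\<in>UNIV. \<Sum>j\<in>UNIV. \<xi>$i * \<xi>$j * C a c i j)
      = (\<integral>y\<in>cellY. phis a y * phi c y * PP a c y * (corr \<xi> a y - corr \<xi> c y)\<^sup>2 \<partial>lebesgue)" for a c
    by (simp add: corr_def square_sum_diff C_def set_integral_double_sum coupling_integrable)
  have "\<xi> \<bullet> (homD Dm PP phi phis om gom *v \<xi>)
      = (\<Sum>i\<in>UNIV. \<Sum>j\<in>UNIV. \<xi>$i * \<xi>$j * ((\<Sum>a\<in>UNIV. E a i j) - 1/2 * (\<Sum>a\<in>UNIV. \<Sum>c\<in>UNIV. C a c i j)))"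
    by (simp add: inner_matrix_vector_expand homD_def E_def C_def)
  also have "\<dots> = (\<Sum>i\<in>UNIV. \<Sum>j\<in>UNIV. \<xi>$i * \<xi>$j * (\<Sum>a\<in>UNIV. E a i j))
      - 1/2 * (\<Sum>i\<in>UNIV. \<Sum>j\<in>UNIV. \<xi>$i * \<xi>$j * (\<Sum>a\<in>UNIV. \<Sum>c\<in>UNIV. C a c i j))"
    by (simp add: right_diff_distrib mult.left_commute[of _ "1/2"] sum_subtractf sum_distrib_left[symmetric]
        sum_divide_distrib[symmetric])
  also have "\<dots> = (\<Sum>a\<in>UNIV. \<Sum>i\<in>UNIV. \<Sum>j\<in>UNIV. \<xi>$i * \<xi>$j * E a i j)
      - 1/2 * (\<Sum>a\<in>UNIV. \<Sum>c\<in>UNIV. \<Sum>i\<in>UNIV. \<Sum>j\<in>UNIV. \<xi>$i * \<xi>$j * C a c i j)"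
    by (simp only: sum_sum_mult_sum_swap)
  finally show ?thesis
    by (simp add: energy coupling)
qed

lemma energy_form_integrable:
  "set_integrable lebesgue cellY (\<lambda>y. (Dtil Dm phi phis a y *v (grad_corr \<xi> a y + \<xi>)) \<bullet> (grad_corr \<xi> a y + \<xi>))"
proof -
  have "grad_corr \<xi> a y + \<xi> = (\<Sum>i\<in>UNIV. \<xi>$i *\<^sub>R (gom i a y + axis i 1))" for y
    by (simp add: grad_corr_def scaleR_add_right sum.distrib sum_axis_scaleR)
  moreover have "set_integrable lebesgue cellY (\<lambda>y. \<Sum>i\<in>UNIV. \<Sum>j\<in>UNIV. \<xi>$i * \<xi>$j *
      ((Dtil Dm phi phis a y *v (gom i a y + axis i 1)) \<bullet> (gom j a y + axis j 1)))"
    using energy_integrable unfolding set_integrable_def scaleR_sum_right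
    by (intro Bochner_Integration.integrable_sum) (auto simp: mult.left_commute[of "indicator cellY _"])
  ultimately show ?thesis
    by (simp add: quadratic_form_sum)
qed

lemma Dtil_coercive:
  "\<exists>c>0. AE y in lebesgue. \<forall>v. c * (phi a y * phis a y) * (norm v)\<^sup>2 \<le> (Dtil Dm phi phis a y *v v) \<bullet> v"
proof -
  obtain c where "c > 0" and c: "AE y in lebesgue. \<forall>v. c * (norm v)\<^sup>2 \<le> (Dm a y *v v) \<bullet> v"
    using Dm_coercive[of a] by blast
  have "AE y in lebesgue. \<forall>v. c * (phi a y * phis a y) * (norm v)\<^sup>2 \<le> (Dtil Dm phi phis a y *v v) \<bullet> v"
    using c phi_pos[of a] phis_pos[of a]
  proof eventually_elim
    case (elim y)
    show ?case
    proof
      fix v :: "real^'d"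
      have "(Dtil Dm phi phis a y *v v) \<bullet> v = (phi a y * phis a y) * ((Dm a y *v v) \<bullet> v)"
        by (simp add: Dtil_def scaleR_matrix_vector_assoc[symmetric])
      then show "c * (phi a y * phis a y) * (norm v)\<^sup>2 \<le> (Dtil Dm phi phis a y *v v) \<bullet> v"
        using elim mult_left_mono[of "c * (norm v)\<^sup>2" "(Dm a y *v v) \<bullet> v" "phi a y * phis a y"]
        by (simp add: mult_ac)
    qed
  qed
  with \<open>c > 0\<close> show ?thesis by blast
qed

lemma energy_nonneg: "AE y in lebesgue. \<forall>v. 0 \<le> (Dtil Dm phi phis a y *v v) \<bullet> v"
proof -
  obtain c where "c > 0" and c: "AE y in lebesgue. \<forall>v. c * (phi a y * phis a y) * (norm v)\<^sup>2 \<le> (Dtil Dm phi phis a y *v v) \<bullet> v"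
    using Dtil_coercive by blast
  show ?thesis
    using c phi_pos[of a] phis_pos[of a]
  proof eventually_elim
    case (elim y)
    show ?case
    proof
      fix v :: "real^'d"
      have "0 \<le> c * (phi a y * phis a y) * (norm v)\<^sup>2"
        using \<open>c > 0\<close> elim(2,3) by simp
      then show "0 \<le> (Dtil Dm phi phis a y *v v) \<bullet> v"
        using elim(1)[rule_format, of v] by linarith
    qed
  qed
qed

lemma coupling_sum_nonpos:
  "(\<Sum>a\<in>UNIV. \<Sum>c\<in>UNIV. \<integral>y\<in>cellY. phis a y * phi c y * PP a c y * (corr \<xi> a y - corr \<xi> c y)\<^sup>2 \<partial>lebesgue) \<le> 0"
proof (intro sum_nonpos)
  fix a c
  show "(\<integral>y\<in>cellY. phis a y * phi c y * PP a c y * (corr \<xi> a y - corr \<xi> c y)\<^sup>2 \<partial>lebesgue) \<le> 0"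
  proof (cases "a = c")
    case False
    have "AE y in lebesgue. y \<in> cellY \<longrightarrow> 0 \<le> - (phis a y * phi c y * PP a c y * (corr \<xi> a y - corr \<xi> c y)\<^sup>2)"
      using PP_offdiag[OF False] phis_pos[of a] phi_pos[of c]
      by eventually_elim (simp add: mult_nonneg_nonpos mult_nonpos_nonneg)
    then have "0 \<le> (\<integral>y\<in>cellY. - (phis a y * phi c y * PP a c y * (corr \<xi> a y - corr \<xi> c y)\<^sup>2) \<partial>lebesgue)"
      by (rule set_integral_nonneg_AE)
    then show ?thesis
      by (simp add: set_lebesgue_integral_def)
  qed simp
qed

lemma corr_weak_grad:
  "L1_per (corr \<xi> a)" "L1_per (grad_corr \<xi> a)" "weak_grad (corr \<xi> a) (grad_corr \<xi> a)"
proof -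
  note om_L1 = H1_per_imp_L1_per[OF om_H1]
  show "L1_per (corr \<xi> a)"
    using L1_per_sum[of UNIV "\<lambda>i. om i a" "\<lambda>i. \<xi>$i"] om_L1 by (simp add: corr_def[abs_def])
  show "L1_per (grad_corr \<xi> a)"
    using L1_per_sum[of UNIV "\<lambda>i. gom i a" "\<lambda>i. \<xi>$i"] om_L1 by (simp add: grad_corr_def[abs_def])
  show "weak_grad (corr \<xi> a) (grad_corr \<xi> a)"
    unfolding corr_def[abs_def] grad_corr_def[abs_def]
    by (rule weak_grad_sum) (use om_L1 om_H1 in \<open>auto simp: H1_per_def\<close>)
qed

lemma energy_eq_0_imp_grad_corr_const:
  assumes "(\<integral>y\<in>cellY. (Dtil Dm phi phis a y *v (grad_corr \<xi> a y + \<xi>)) \<bullet> (grad_corr \<xi> a y + \<xi>) \<partial>lebesgue) = 0"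
  shows "AE y in lebesgue. y \<in> cellY \<longrightarrow> grad_corr \<xi> a y = - \<xi>"
proof -
  obtain c where "c > 0" and c: "AE y in lebesgue. \<forall>v. c * (phi a y * phis a y) * (norm v)\<^sup>2 \<le> (Dtil Dm phi phis a y *v v) \<bullet> v"
    using Dtil_coercive by blast
  have "AE y in lebesgue. y \<in> cellY \<longrightarrow> (Dtil Dm phi phis a y *v (grad_corr \<xi> a y + \<xi>)) \<bullet> (grad_corr \<xi> a y + \<xi>) = 0"
    by (rule set_integral_nonneg_eq_0_AE[OF energy_form_integrable _ assms])
       (use energy_nonneg[of a] in \<open>auto elim!: eventually_mono\<close>)
  then show ?thesis
    using c phi_pos[of a] phis_pos[of a]
  proof eventually_elim
    case (elim y)
    show ?case
    proof
      assume "y \<in> cellY"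
      then have "c * (phi a y * phis a y) * (norm (grad_corr \<xi> a y + \<xi>))\<^sup>2 \<le> 0"
        using elim(1) elim(2)[rule_format, of "grad_corr \<xi> a y + \<xi>"] by simp
      moreover have "0 < c * (phi a y * phis a y)"
        using \<open>c > 0\<close> elim(3,4) by simp
      ultimately have "(norm (grad_corr \<xi> a y + \<xi>))\<^sup>2 \<le> 0"
        using mult_le_cancel_left_pos[of "c * (phi a y * phis a y)" "(norm (grad_corr \<xi> a y + \<xi>))\<^sup>2" 0]
        by simp
      then show "grad_corr \<xi> a y = - \<xi>"
        by (simp add: eq_neg_iff_add_eq_0)
    qed
  qed
qed

lemma homD_positive:
  assumes "\<xi> \<noteq> 0"
  shows "0 < \<xi> \<bullet> (homD Dm PP phi phis om gom *v \<xi>)"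
proof (rule ccontr)
  assume nonpos: "\<not> 0 < \<xi> \<bullet> (homD Dm PP phi phis om gom *v \<xi>)"
  define J where "J a = (\<integral>y\<in>cellY. (Dtil Dm phi phis a y *v (grad_corr \<xi> a y + \<xi>)) \<bullet> (grad_corr \<xi> a y + \<xi>) \<partial>lebesgue)"
    for a
  have J_nonneg: "0 \<le> J a" for a
    unfolding J_def by (rule set_integral_nonneg_AE) (use energy_nonneg[of a] in \<open>auto elim!: eventually_mono\<close>)
  obtain a :: 'n where True by blast
  have "J a \<le> (\<Sum>a\<in>UNIV. J a)"
    by (rule member_le_sum) (auto simp: J_nonneg)
  also have "\<dots> \<le> \<xi> \<bullet> (homD Dm PP phi phis om gom *v \<xi>)"
    using coupling_sum_nonpos[of \<xi>] by (simp add: homD_quadratic_form J_def)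
  finally have "J a = 0"
    using nonpos J_nonneg[of a] by linarith
  then have "AE y in lebesgue. y \<in> cellY \<longrightarrow> grad_corr \<xi> a y = - \<xi>"
    unfolding J_def by (rule energy_eq_0_imp_grad_corr_const)
  then have "- \<xi> = 0"
    by (rule L1_per_weak_grad_const_eq_0[OF corr_weak_grad])
  with assms show False by simp
qed

theorem homD_sym_pos_def: "sym_pos_def (homD Dm PP phi phis om gom)"
  unfolding sym_pos_def_def using homD_symmetric homD_positive by blast

end

text \<open>Only the hypotheses on \<open>Dm\<close>, \<open>PP\<close>, \<open>phi\<close>, \<open>phis\<close> and the \<open>H\<^sup>1\<^sub>#\<close> regularity of the
  correctors enter the proof.\<close>

theorem lemma6p3:
  fixes rho :: "'n::finite \<Rightarrow> real^'d \<Rightarrow> real"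
    and b :: "'n \<Rightarrow> real^'d \<Rightarrow> real^'d"
    and divb :: "'n \<Rightarrow> real^'d \<Rightarrow> real"
    and Dm :: "'n \<Rightarrow> real^'d \<Rightarrow> real^'d^'d"
    and PP :: "'n \<Rightarrow> 'n \<Rightarrow> real^'d \<Rightarrow> real"
    and lam :: real
    and phi phis :: "'n \<Rightarrow> real^'d \<Rightarrow> real"
    and gphi gphis :: "'n \<Rightarrow> real^'d \<Rightarrow> real^'d"
    and om :: "'d \<Rightarrow> 'n \<Rightarrow> real^'d \<Rightarrow> real"
    and gom :: "'d \<Rightarrow> 'n \<Rightarrow> real^'d \<Rightarrow> real^'d"
  assumes rho: "\<And>a. Linf_per (rho a)" "\<And>a. \<exists>c>0. AE y in lebesgue. rho a y \<ge> c"
    and b: "\<And>a. Linf_per (b a)" "\<And>a. Linf_per (divb a)" "\<And>a. weak_div (b a) (divb a)"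
    and Dm: "\<And>a. Linf_per (Dm a)" "\<And>a. AE y in lebesgue. transpose (Dm a y) = Dm a y"
      "\<And>a. \<exists>c>0. AE y in lebesgue. \<forall>\<xi>. (Dm a y *v \<xi>) \<bullet> \<xi> \<ge> c * (norm \<xi>)\<^sup>2"
    and PP: "\<And>a c. Linf_per (PP a c)" "\<And>a c. a \<noteq> c \<Longrightarrow> AE y in lebesgue. PP a c y \<le> 0"
      "irreducible_coupling PP"
    and phi: "\<And>a. H1_per (phi a) (gphi a)" "\<And>a. Linf_per (phi a)"
      "\<And>a. AE y in lebesgue. phi a y > 0"
    and phis: "\<And>a. H1_per (phis a) (gphis a)" "\<And>a. Linf_per (phis a)"
      "\<And>a. AE y in lebesgue. phis a y > 0"
    and eig: "\<And>a v gv. C1_per v gv \<Longrightarrow>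
      (\<integral>y\<in>cellY. (b a y \<bullet> gphi a y) * v y + (Dm a y *v gphi a y) \<bullet> gv y
          + (\<Sum>c\<in>UNIV. PP a c y * phi c y) * v y \<partial>lebesgue)
      = lam * (\<integral>y\<in>cellY. rho a y * phi a y * v y \<partial>lebesgue)"
    and eig_adj: "\<And>a v gv. C1_per v gv \<Longrightarrow>
      (\<integral>y\<in>cellY. phis a y * (b a y \<bullet> gv y) + (Dm a y *v gphis a y) \<bullet> gv y
          + (\<Sum>c\<in>UNIV. PP c a y * phis c y) * v y \<partial>lebesgue)
      = lam * (\<integral>y\<in>cellY. rho a y * phis a y * v y \<partial>lebesgue)"
    and norm1: "(\<Sum>a\<in>UNIV. (\<integral>y\<in>cellY. rho a y * phi a y * phis a y \<partial>lebesgue)) = 1"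
    and om: "\<And>i a. H1_per (om i a) (gom i a)"
    and cell: "\<And>i a v gv. C1_per v gv \<Longrightarrow>
      (\<integral>y\<in>cellY. (btil b Dm phi gphi phis gphis a y \<bullet> (gom i a y + axis i 1)) * v y
          + (Dtil Dm phi phis a y *v (gom i a y + axis i 1)) \<bullet> gv y
          + (\<Sum>c\<in>UNIV. PP a c y * phis a y * phi c y * (om i c y - om i a y)) * v y \<partial>lebesgue)
      = (\<integral>y\<in>cellY. phi a y * phis a y * rho a y * (bstar b Dm phi gphi phis gphis \<bullet> axis i 1)
            * v y \<partial>lebesgue)"
  shows "sym_pos_def (homD Dm PP phi phis om gom)"
proof -
  interpret cell_coefficients Dm PP phi phis om gom
    by unfold_locales (fact Dm PP phi phis om)+
  show ?thesis
    by (rule homD_sym_pos_def)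
qed

end
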